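(* Let $A\subset\mathbb{R}^d$ have positive reach and $1\leq k\leq d$. Then (i) $T_k(A)\cap\overline{\bigcup_{i=0}^{k-1}T_i(A)}=\emptyset$; (ii) the mapping $\psi_k^A$ is continuous on $T_k(A)$; (iii) $T_1(A)$ is closed; (iv) $T_0(A)$ is the set of all isolated points of $A$.
   Context: A set has positive reach if there is $\varepsilon>0$ such that every point at distance less than $\varepsilon$ from it has a unique nearest point in it. $\operatorname{Tan}(A,x)$ is the tangent cone ($u\in\operatorname{Tan}(A,x)$ iff $u=0$ or $r_i(x_i-x)\to u$ for some $x\neq x_i\in A$, $x_i\to x$, $r_i>0$), $\widetilde{\operatorname{Tan}}(A,x)=\operatorname{span}\operatorname{Tan}(A,x)$, $T_j(A)=\{x\in A:\dim\widetilde{\operatorname{Tan}}(A,x)=j\}$, and $\psi_k^A:T_k(A)\to G(d,k)$, $\psi_k^A(x)=\widetilde{\operatorname{Tan}}(A,x)$, where the Grassmannian $G(d,k)$ carries the metric $\rho_k(U,V)=\max\big(\sup_{u\in U,|u|=1}\mathrm{dist}(u,V),\sup_{v\in V,|v|=1}\mathrm{dist}(v,U)\big)$. *)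

theory Defs
  imports "HOL-Analysis.Analysis"
begin

definition positive_reach :: "'a::euclidean_space set \<Rightarrow> bool" where
  "positive_reach A \<longleftrightarrow> (\<exists>\<epsilon>>0. \<forall>y. (\<exists>a\<in>A. dist y a < \<epsilon>) \<longrightarrow>
      (\<exists>!a. a \<in> A \<and> (\<forall>b\<in>A. dist y a \<le> dist y b)))"

definition Tan :: "'a::euclidean_space set \<Rightarrow> 'a \<Rightarrow> 'a set" where
  "Tan A x = {u. u = 0 \<or> (\<exists>xs r. (\<forall>i. xs i \<in> A \<and> xs i \<noteq> x) \<and> xs \<longlonglongrightarrow> x
      \<and> (\<forall>i. r i > (0::real)) \<and> (\<lambda>i. r i *\<^sub>R (xs i - x)) \<longlonglongrightarrow> u)}"

definition TanSpan :: "'a::euclidean_space set \<Rightarrow> 'a \<Rightarrow> 'a set" where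
  "TanSpan A x = span (Tan A x)"

definition Tset :: "'a::euclidean_space set \<Rightarrow> nat \<Rightarrow> 'a set" where
  "Tset A j = {x \<in> A. dim (TanSpan A x) = j}"

definition psi :: "'a::euclidean_space set \<Rightarrow> 'a \<Rightarrow> 'a set" where
  "psi A x = TanSpan A x"

definition grass_dist :: "'a::euclidean_space set \<Rightarrow> 'a set \<Rightarrow> real" where
  "grass_dist U V = max (SUP u\<in>{u\<in>U. norm u = 1}. infdist u V)
                        (SUP v\<in>{v\<in>V. norm v = 1}. infdist v U)"

end

theory Submission
  imports Defs
begin

(* Let A have reach at least r > 0 (Federer). If a unit vector e at y \<in> A lies in the dual of the
   tangent cone Tan A y, then the nearest points to y + s e for small s stay close to y, and the normal
   segments through them can be extended up to length r because the distance to A increases along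
   normal directions. Hence dist (y + t e) A = t for t < r, which gives Federer's inequality
   e \<bullet> (c - y) \<le> |c - y|\<^sup>2 / r for all c \<in> A. Approximating a tangent vector u at x by l (c - x),
   this inequality shows that unit normals at points y near x are almost orthogonal to the tangent
   span at x. So dim (TanSpan A y) \<ge> dim (TanSpan A x) near x, which gives (i) and (iii), and
   when the dimensions agree the two tangent spans are close in the Grassmannian metric, which
   gives (ii). Part (iv) holds for every set. *)

section \<open>Euclidean geometry\<close>

lemma norm_add_scaleR_unit_power2:
  fixes a e :: "'a::real_inner"
  assumes "norm e = 1"
  shows "(norm (a + t *\<^sub>R e))\<^sup>2 = (norm a)\<^sup>2 + 2 * t * (e \<bullet> a) + t\<^sup>2"
proof -
  have "e \<bullet> e = 1"
    using assms by (simp add: norm_eq_1)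
  then show ?thesis
    unfolding power2_norm_eq_inner
    by (simp add: inner_add_left inner_add_right inner_commute power2_eq_square algebra_simps)
qed

lemma norm_sgn_diff_le:
  fixes w e :: "'a::real_normed_vector"
  assumes "norm e = 1" "0 < s"
  shows "norm (sgn w - e) \<le> 2 * norm (w - s *\<^sub>R e) / s"
proof (cases "w = 0")
  case True
  with assms show ?thesis by simp
next
  case False
  have "sgn w - e = ((s - norm w) / s) *\<^sub>R sgn w + (1 / s) *\<^sub>R (w - s *\<^sub>R e)"
    using False assms(2) by (simp add: sgn_div_norm algebra_simps divide_inverse_commute)
  then have "norm (sgn w - e) \<le> norm (((s - norm w) / s) *\<^sub>R sgn w) + norm ((1 / s) *\<^sub>R (w - s *\<^sub>R e))"
    by (metis norm_triangle_ineq)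
  also have "\<dots> = \<bar>s - norm w\<bar> / s + norm (w - s *\<^sub>R e) / s"
    using False assms(2) by (simp add: norm_sgn)
  finally have "norm (sgn w - e) \<le> \<bar>s - norm w\<bar> / s + norm (w - s *\<^sub>R e) / s" .
  moreover have "\<bar>s - norm w\<bar> \<le> norm (w - s *\<^sub>R e)"
    using norm_triangle_ineq3[of w "s *\<^sub>R e"] assms by (simp add: abs_minus_commute)
  ultimately show ?thesis
    using assms(2) by (simp add: divide_right_mono field_simps)
qed

lemma inner_lt_boundary_point_cball:
  fixes n :: "'a::real_inner"
  assumes "norm n = 1" "0 < \<tau>" "q \<in> cball z \<tau>" "q \<noteq> z + \<tau> *\<^sub>R n"
  shows "q \<bullet> n < (z + \<tau> *\<^sub>R n) \<bullet> n"
proof -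
  define c where "c = z - q"
  define g where "g = c + \<tau> *\<^sub>R n"
  have "q = z + \<tau> *\<^sub>R n - g"
    unfolding g_def c_def by simp
  with assms(4) have "g \<noteq> 0"
    by auto
  have "norm c \<le> \<tau>"
    using assms(3) unfolding c_def by (simp add: dist_norm)
  then have "(norm c)\<^sup>2 \<le> \<tau>\<^sup>2"
    by (rule power_mono) simp
  have "n \<bullet> n = 1"
    using assms(1) by (simp add: norm_eq_1)
  then have "g \<bullet> n = c \<bullet> n + \<tau>" "g \<bullet> g = (norm c)\<^sup>2 + 2 * \<tau> * (c \<bullet> n) + \<tau>\<^sup>2"
    unfolding g_def power2_norm_eq_inner
    by (simp_all add: inner_add_left inner_add_right inner_commute power2_eq_square algebra_simps)
  moreover have "g \<bullet> g > 0"
    using \<open>g \<noteq> 0\<close> by simp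
  moreover have "2 * \<tau> * (g \<bullet> n) = 2 * \<tau>\<^sup>2 + 2 * \<tau> * (c \<bullet> n)"
    unfolding \<open>g \<bullet> n = c \<bullet> n + \<tau>\<close> by (simp add: distrib_left power2_eq_square)
  ultimately have "2 * \<tau> * (g \<bullet> n) > 0"
    using \<open>(norm c)\<^sup>2 \<le> \<tau>\<^sup>2\<close> by linarith
  then have "g \<bullet> n > 0"
    using assms(2) by (simp add: zero_less_mult_iff)
  then show ?thesis
    unfolding g_def c_def by (simp add: inner_diff_left inner_add_left)
qed

lemma dist_lt_dist_add_scaleR:
  fixes g q p :: "'a::real_inner"
  assumes "0 < \<epsilon>" "0 < g \<bullet> (q - p)"
  shows "dist q p < dist (q + \<epsilon> *\<^sub>R g) p"
proof -
  have "(dist (q + \<epsilon> *\<^sub>R g) p)\<^sup>2 = (dist q p)\<^sup>2 + 2 * \<epsilon> * (g \<bullet> (q - p)) + \<epsilon>\<^sup>2 * (g \<bullet> g)"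
    unfolding dist_norm power2_norm_eq_inner
    by (simp add: inner_add_left inner_add_right inner_diff_left inner_diff_right inner_commute
        power2_eq_square algebra_simps)
  moreover have "0 < 2 * \<epsilon> * (g \<bullet> (q - p))" "0 \<le> \<epsilon>\<^sup>2 * (g \<bullet> g)"
    using assms by simp_all
  ultimately have "(dist q p)\<^sup>2 < (dist (q + \<epsilon> *\<^sub>R g) p)\<^sup>2"
    by linarith
  then show ?thesis
    by (rule power_less_imp_less_base) simp
qed

lemma norm_le_if_mem_tangent_cball:
  fixes e :: "'a::real_inner"
  assumes "norm e = 1" "b \<in> cball (y + s *\<^sub>R e) s" "e \<bullet> (b - y) \<le> \<eta> * norm (b - y)" "0 \<le> \<eta>"
  shows "norm (b - y) \<le> 2 * s * \<eta>"
proof (cases "b = y")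
  case True
  then have "0 \<le> s"
    using assms(2) zero_le_dist[of "y + s *\<^sub>R e" b] unfolding mem_cball by linarith
  with True assms(4) show ?thesis
    by simp
next
  case False
  have "0 \<le> s"
    using assms(2) zero_le_dist[of "y + s *\<^sub>R e" b] unfolding mem_cball by linarith
  then have "(norm ((y - b) + s *\<^sub>R e))\<^sup>2 \<le> s\<^sup>2"
    using assms(2) by (simp add: dist_norm power_mono algebra_simps)
  then have "(norm (b - y))\<^sup>2 \<le> 2 * s * (e \<bullet> (b - y))"
    using norm_add_scaleR_unit_power2[OF assms(1), of "y - b" s]
    by (simp add: norm_minus_commute inner_diff_right algebra_simps)
  also have "\<dots> \<le> 2 * s * (\<eta> * norm (b - y))"
    using assms(3) \<open>0 \<le> s\<close> by (simp add: mult_left_mono)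
  finally show ?thesis
    using False by (simp add: power2_eq_square)
qed

lemma inner_le_if_infdist_eq:
  fixes A :: "'a::real_inner set"
  assumes "infdist (y + t *\<^sub>R e) A = t" "norm e = 1" "c \<in> A"
  shows "2 * t * (e \<bullet> (c - y)) \<le> (norm (c - y))\<^sup>2"
proof -
  have "0 \<le> t"
    using assms(1) infdist_nonneg by metis
  moreover have "t \<le> norm ((y - c) + t *\<^sub>R e)"
    using infdist_le[OF assms(3), of "y + t *\<^sub>R e"] assms(1) by (simp add: dist_norm algebra_simps)
  ultimately have "t\<^sup>2 \<le> (norm ((y - c) + t *\<^sub>R e))\<^sup>2"
    by (simp add: power_mono)
  also have "\<dots> = (norm (y - c))\<^sup>2 + 2 * t * (e \<bullet> (y - c)) + t\<^sup>2"
    by (rule norm_add_scaleR_unit_power2[OF assms(2)])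
  also have "\<dots> = (norm (c - y))\<^sup>2 - 2 * t * (e \<bullet> (c - y)) + t\<^sup>2"
    by (simp add: norm_minus_commute inner_diff_right algebra_simps)
  finally show ?thesis by simp
qed

lemma infdist_shorter_segment:
  fixes A :: "'a::real_normed_vector set"
  assumes "b \<in> A" "norm w = 1" "infdist (b + s *\<^sub>R w) A = s" "0 \<le> t" "t \<le> s"
  shows "infdist (b + t *\<^sub>R w) A = t"
proof (rule antisym)
  show "infdist (b + t *\<^sub>R w) A \<le> t"
    using infdist_le[OF assms(1), of "b + t *\<^sub>R w"] assms(2,4) by (simp add: dist_norm)
  have "dist (b + s *\<^sub>R w) (b + t *\<^sub>R w) = s - t"
    using assms(2,5) by (simp add: dist_norm scaleR_diff_left[symmetric])
  then show "t \<le> infdist (b + t *\<^sub>R w) A"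
    using infdist_triangle[of "b + s *\<^sub>R w" A "b + t *\<^sub>R w"] assms(3) by simp
qed

section \<open>Subspaces with almost orthogonal normals\<close>

lemma exists_unit_orthogonal_in_span:
  fixes S L :: "'a::euclidean_space set"
  assumes "dim L < dim S"
  obtains e where "e \<in> span S" "norm e = 1" "\<forall>l\<in>L. e \<bullet> l = 0"
proof -
  define P where "P = {y. \<forall>x\<in>span L. orthogonal x y}"
  have "subspace P"
    unfolding P_def by (rule subspace_orthogonal_to_vectors)
  have "dim {y \<in> UNIV. \<forall>x\<in>span L. orthogonal x y} + dim (span L) = dim (UNIV :: 'a set)"
    by (rule dim_subspace_orthogonal_to_vectors) auto
  then have "dim P + dim L = DIM('a)"
    unfolding P_def by simp
  moreover have "dim {x + y |x y. x \<in> span S \<and> y \<in> P} + dim (span S \<inter> P) = dim (span S) + dim P"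
    using \<open>subspace P\<close> by (intro dim_sums_Int) auto
  moreover have "dim {x + y |x y. x \<in> span S \<and> y \<in> P} \<le> DIM('a)"
    by (rule dim_subset_UNIV)
  ultimately have "dim (span S \<inter> P) > 0"
    using assms dim_span[of S] by linarith
  then have "\<not> span S \<inter> P \<subseteq> {0}"
    by (metis dim_eq_0 neq0_conv)
  then obtain e0 where e0: "e0 \<in> span S \<inter> P" "e0 \<noteq> 0"
    by blast
  show ?thesis
  proof
    show "sgn e0 \<in> span S" "norm (sgn e0) = 1"
      using e0 by (simp_all add: sgn_div_norm span_mul norm_sgn)
    show "\<forall>l\<in>L. sgn e0 \<bullet> l = 0"
      using e0(1) span_base unfolding P_def orthogonal_def
      by (fastforce simp: sgn_div_norm inner_commute)
  qed
qed

lemma exists_unit_in_subspace: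
  fixes X :: "'a::euclidean_space set"
  assumes "subspace X" "1 \<le> dim X"
  obtains u where "u \<in> X" "norm u = 1"
proof -
  have "dim ({} :: 'a set) < dim X"
    using assms(2) by simp
  then obtain u where "u \<in> span X" "norm u = 1"
    using exists_unit_orthogonal_in_span by metis
  moreover have "span X = X"
    using assms(1) by simp
  ultimately show ?thesis
    using that by metis
qed

lemma sum_inner_scaleR_bounded_below:
  fixes B :: "'a::euclidean_space set"
  assumes "finite B"
  obtains m where "m > 0" "\<And>v. v \<in> span B \<Longrightarrow> m * norm v \<le> norm (\<Sum>u\<in>B. (u \<bullet> v) *\<^sub>R u)"
proof -
  define f where "f v = (\<Sum>u\<in>B. (u \<bullet> v) *\<^sub>R u)" for v
  have "bounded_linear f"
    unfolding f_def by (intro bounded_linear_sum bounded_linear_scaleR_const bounded_linear_inner_right)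
  moreover have "v = 0" if "v \<in> span B" "f v = 0" for v
  proof -
    have "(\<Sum>u\<in>B. (u \<bullet> v)\<^sup>2) = v \<bullet> f v"
      unfolding f_def by (simp add: inner_sum_right inner_commute power2_eq_square)
    then have "\<forall>u\<in>B. u \<bullet> v = 0"
      using that(2) assms by (simp add: sum_nonneg_eq_0_iff)
    then have "orthogonal v v"
      using that(1) by (intro orthogonal_to_span[of v B v]) (auto simp: orthogonal_def inner_commute)
    then show "v = 0"
      by (simp add: orthogonal_def)
  qed
  ultimately show ?thesis
    using injective_imp_isometric[of "span B" f] that unfolding f_def by (auto simp: closed_subspace)
qed

lemma span_inner_le_sum:
  fixes B :: "'a::euclidean_space set"
  assumes "finite B"
  obtains C where "C > 0" "\<And>e z. z \<in> span B \<Longrightarrow> \<bar>z \<bullet> e\<bar> \<le> C * norm z * (\<Sum>u\<in>B. \<bar>u \<bullet> e\<bar>)"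
proof -
  obtain m where m: "m > 0" "\<And>v. v \<in> span B \<Longrightarrow> m * norm v \<le> norm (\<Sum>u\<in>B. (u \<bullet> v) *\<^sub>R u)"
    using sum_inner_scaleR_bounded_below[OF assms] by blast
  define M where "M = (\<Sum>u\<in>B. norm u) + 1"
  have "M > 0"
    unfolding M_def by (simp add: add_nonneg_pos sum_nonneg)
  have norm_le_M: "norm u \<le> M" if "u \<in> B" for u
    using member_le_sum[OF that, of norm] assms unfolding M_def by simp
  show ?thesis
  proof (rule that[of "M / m"])
    show "M / m > 0"
      using m \<open>M > 0\<close> by simp
    fix e z assume z: "z \<in> span B"
    obtain e1 e2 where e: "e1 \<in> span B" "\<And>w. w \<in> span B \<Longrightarrow> orthogonal e2 w" "e = e1 + e2"
      using orthogonal_subspace_decomp_exists by metis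
    have same: "w \<bullet> e = w \<bullet> e1" if "w \<in> span B" for w
      using e(2)[OF that] e(3) by (simp add: inner_add_right orthogonal_def inner_commute)
    have "m * norm e1 \<le> norm (\<Sum>u\<in>B. (u \<bullet> e1) *\<^sub>R u)"
      using m(2)[OF e(1)] .
    also have "\<dots> \<le> (\<Sum>u\<in>B. \<bar>u \<bullet> e\<bar> * norm u)"
      using same[OF span_base] by (intro order.trans[OF norm_sum] eq_refl sum.cong) auto
    also have "\<dots> \<le> (\<Sum>u\<in>B. \<bar>u \<bullet> e\<bar>) * M"
      unfolding sum_distrib_right using norm_le_M by (intro sum_mono mult_left_mono) auto
    finally have "norm e1 \<le> (\<Sum>u\<in>B. \<bar>u \<bullet> e\<bar>) * M / m"
      using m(1) by (simp add: field_simps)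
    then have "norm z * norm e1 \<le> norm z * ((\<Sum>u\<in>B. \<bar>u \<bullet> e\<bar>) * M / m)"
      by (rule mult_left_mono) simp
    moreover have "\<bar>z \<bullet> e\<bar> \<le> norm z * norm e1"
      using same[OF z] Cauchy_Schwarz_ineq2[of z e1] by simp
    ultimately show "\<bar>z \<bullet> e\<bar> \<le> M / m * norm z * (\<Sum>u\<in>B. \<bar>u \<bullet> e\<bar>)"
      by (simp add: field_simps)
  qed
qed

definition almost_orthogonal_normals :: "real \<Rightarrow> 'a::real_inner set \<Rightarrow> 'a set \<Rightarrow> bool" where
  "almost_orthogonal_normals \<gamma> Y X \<longleftrightarrow>
     (\<forall>e. norm e = 1 \<longrightarrow> (\<forall>l\<in>Y. e \<bullet> l = 0) \<longrightarrow> (\<forall>z\<in>X. \<bar>z \<bullet> e\<bar> \<le> \<gamma> * norm z))"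

lemma dim_le_if_almost_orthogonal_normals:
  fixes X Y :: "'a::euclidean_space set"
  assumes "subspace X" "almost_orthogonal_normals \<gamma> Y X" "\<gamma> < 1"
  shows "dim X \<le> dim Y"
proof (rule ccontr)
  assume "\<not> dim X \<le> dim Y"
  then obtain e where "e \<in> span X" "norm e = 1" "\<forall>l\<in>Y. e \<bullet> l = 0"
    using exists_unit_orthogonal_in_span[of Y X] by auto
  moreover have "e \<in> X"
    using \<open>e \<in> span X\<close> assms(1) by (metis span_eq_iff)
  ultimately have "\<bar>e \<bullet> e\<bar> \<le> \<gamma> * norm e"
    using assms(2) unfolding almost_orthogonal_normals_def by blast
  moreover have "e \<bullet> e = 1"
    using \<open>norm e = 1\<close> by (simp add: norm_eq_1)
  ultimately show False
    using \<open>norm e = 1\<close> assms(3) by simp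
qed

lemma infdist_le_if_almost_orthogonal_normals:
  fixes X Y :: "'a::euclidean_space set"
  assumes "subspace Y" "almost_orthogonal_normals \<gamma> Y X" "v \<in> X" "norm v = 1" "0 \<le> \<gamma>"
  shows "infdist v Y \<le> \<gamma>"
proof -
  have "span Y = Y"
    using assms(1) by simp
  then obtain p q where pq: "p \<in> Y" "\<And>w. w \<in> Y \<Longrightarrow> orthogonal q w" "v = p + q"
    using orthogonal_subspace_decomp_exists[of Y v] by metis
  have "infdist v Y \<le> norm q"
    using infdist_le[OF pq(1), of v] pq(3) by (simp add: dist_norm)
  moreover have "norm q \<le> \<gamma>"
  proof (cases "q = 0")
    case True
    with assms(5) show ?thesis by simp
  next
    case False
    have "\<forall>l\<in>Y. sgn q \<bullet> l = 0"
      using pq(2) by (simp add: orthogonal_def sgn_div_norm)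
    moreover have "norm (sgn q) = 1"
      using False by (simp add: norm_sgn)
    ultimately have "\<bar>v \<bullet> sgn q\<bar> \<le> \<gamma> * norm v"
      using assms(2,3) unfolding almost_orthogonal_normals_def by blast
    moreover have "v \<bullet> q = (norm q)\<^sup>2"
      using pq(2)[OF pq(1)] pq(3)
      by (simp add: inner_add_left inner_add_right orthogonal_def inner_commute power2_norm_eq_inner)
    then have "v \<bullet> sgn q = norm q"
      using False by (simp add: sgn_div_norm power2_eq_square)
    ultimately show ?thesis
      using assms(4) by simp
  qed
  ultimately show ?thesis by linarith
qed

(* Here w = w1 + w2 is a unit vector split along a subspace containing a, and a + t w2 is a unit
   vector orthogonal to w whose component a in that subspace is small. *)
lemma norm_le_if_orthogonal_to_unit:
  fixes a w1 w2 :: "'a::real_inner"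
  assumes "a \<bullet> w2 = 0" "w1 \<bullet> w2 = 0" "norm (w1 + w2) = 1"
    and "norm (a + t *\<^sub>R w2) = 1" "(a + t *\<^sub>R w2) \<bullet> (w1 + w2) = 0"
    and "norm a \<le> \<gamma>" "\<gamma> \<le> 1/2"
  shows "norm w2 \<le> 2 * \<gamma>"
proof -
  define N where "N = norm w2"
  have "(a + t *\<^sub>R w2) \<bullet> (a + t *\<^sub>R w2) = 1"
    using assms(4) by (simp add: norm_eq_1)
  then have "(norm a)\<^sup>2 + t\<^sup>2 * N\<^sup>2 = 1"
    using assms(1) unfolding N_def power2_norm_eq_inner
    by (simp add: inner_add_left inner_add_right inner_commute power2_eq_square algebra_simps)
  then have "(norm a)\<^sup>2 + (\<bar>t\<bar> * N)\<^sup>2 = 1"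
    by (simp add: power_mult_distrib)
  moreover have "(norm a)\<^sup>2 \<le> (1/2)\<^sup>2"
    using assms(6,7) by (intro power_mono) auto
  ultimately have "(1/2)\<^sup>2 \<le> (\<bar>t\<bar> * N)\<^sup>2"
    unfolding power2_eq_square by linarith
  then have tN: "1/2 \<le> \<bar>t\<bar> * N"
    using N_def abs_ge_zero mult_nonneg_nonneg norm_ge_zero power2_le_imp_le by metis
  have "(w1 + w2) \<bullet> (w1 + w2) = 1"
    using assms(3) by (simp add: norm_eq_1)
  then have "(norm w1)\<^sup>2 + N\<^sup>2 = 1"
    using assms(2) unfolding N_def
    by (simp add: power2_norm_eq_inner inner_add_left inner_add_right inner_commute)
  then have "(norm w1)\<^sup>2 \<le> 1\<^sup>2"
    using zero_le_power2[of N] unfolding power_one by linarith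
  then have "norm w1 \<le> 1"
    by (rule power2_le_imp_le) simp
  have "a \<bullet> w1 + t * N\<^sup>2 = 0"
    using assms(1,2,5) unfolding N_def
    by (simp add: power2_norm_eq_inner inner_add_left inner_add_right inner_commute)
  then have "t * N\<^sup>2 = - (a \<bullet> w1)"
    by linarith
  then have "\<bar>t\<bar> * N\<^sup>2 = \<bar>a \<bullet> w1\<bar>"
    by (metis abs_minus_cancel abs_mult abs_power2)
  also have "\<dots> \<le> norm a * norm w1"
    by (rule Cauchy_Schwarz_ineq2)
  also have "\<dots> \<le> \<gamma>"
    using assms(6) \<open>norm w1 \<le> 1\<close> by (metis mult_mono mult.right_neutral norm_ge_zero order.trans)
  finally have "(\<bar>t\<bar> * N) * N \<le> \<gamma>"
    by (simp add: power2_eq_square mult.assoc)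
  moreover have "(1/2) * N \<le> (\<bar>t\<bar> * N) * N"
    using mult_right_mono[OF tN, of N] N_def by simp
  ultimately show ?thesis
    unfolding N_def by simp
qed

lemma infdist_le_if_almost_orthogonal_normals_dim:
  fixes X Y :: "'a::euclidean_space set"
  assumes "subspace X" "subspace Y" "dim Y \<le> dim X" "almost_orthogonal_normals \<gamma> Y X"
    and "w \<in> Y" "norm w = 1" "0 \<le> \<gamma>" "\<gamma> \<le> 1/2"
  shows "infdist w X \<le> 2 * \<gamma>"
proof -
  have "span X = X"
    using assms(1) by simp
  then obtain w1 w2 where w: "w1 \<in> X" "\<And>v. v \<in> X \<Longrightarrow> orthogonal w2 v" "w = w1 + w2"
    using orthogonal_subspace_decomp_exists[of X w] by metis
  have w12: "w1 \<bullet> w2 = 0"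
    using w(2)[OF w(1)] by (simp add: orthogonal_def inner_commute)
  have "infdist w X \<le> norm w2"
    using infdist_le[OF w(1), of w] w(3) by (simp add: dist_norm)
  moreover have "norm w2 \<le> 2 * \<gamma>"
  proof (cases "w2 = 0")
    case True
    with assms(7) show ?thesis by simp
  next
    case False
    have "w \<notin> span X"
    proof
      assume "w \<in> span X"
      then have "w2 \<in> X"
        using subspace_diff[OF assms(1) _ w(1), of w] w(3) \<open>span X = X\<close> by simp
      then have "w2 \<bullet> w2 = 0"
        using w(2) by (simp add: orthogonal_def)
      with False show False
        by simp
    qed
    \<comment> \<open>a unit normal of Y in span (insert w X) has a small component in X\<close>
    then have "dim Y < dim (insert w X)"
      using assms(3) by (simp add: dim_insert)
    then obtain e where e: "e \<in> span (insert w X)" "norm e = 1" "\<forall>l\<in>Y. e \<bullet> l = 0"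
      using exists_unit_orthogonal_in_span by metis
    then obtain t where "e - t *\<^sub>R w \<in> X"
      using span_breakdown_eq \<open>span X = X\<close> by blast
    define a where "a = e - t *\<^sub>R w + t *\<^sub>R w1"
    have "a \<in> X"
      unfolding a_def using \<open>e - t *\<^sub>R w \<in> X\<close> w(1) assms(1) by (simp add: subspace_add subspace_scale)
    have e_eq: "e = a + t *\<^sub>R w2"
      unfolding a_def w(3) by (simp add: algebra_simps)
    have aw2: "a \<bullet> w2 = 0"
      using w(2)[OF \<open>a \<in> X\<close>] by (simp add: orthogonal_def inner_commute)
    have "\<bar>a \<bullet> e\<bar> \<le> \<gamma> * norm a"
      using assms(4) e(2,3) \<open>a \<in> X\<close> unfolding almost_orthogonal_normals_def by blast
    moreover have "a \<bullet> e = (norm a)\<^sup>2"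
      unfolding e_eq using aw2 by (simp add: inner_add_right power2_norm_eq_inner)
    ultimately have "norm a * norm a \<le> \<gamma> * norm a"
      by (simp add: power2_eq_square)
    then have "norm a \<le> \<gamma>"
      using assms(7) by (cases "a = 0") auto
    moreover have "e \<bullet> w = 0"
      using e(3) assms(5) by blast
    ultimately show ?thesis
      using norm_le_if_orthogonal_to_unit[OF aw2 w12, of t \<gamma>] e(2) assms(6,8)
      unfolding e_eq w(3) by simp
  qed
  ultimately show ?thesis by linarith
qed

lemma grass_dist_le_if_almost_orthogonal_normals:
  fixes X Y :: "'a::euclidean_space set"
  assumes "subspace X" "subspace Y" "dim Y = dim X" "1 \<le> dim X"
    and "almost_orthogonal_normals \<gamma> Y X" "0 \<le> \<gamma>" "\<gamma> \<le> 1/2"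
  shows "grass_dist Y X \<le> 2 * \<gamma>"
  unfolding grass_dist_def
proof (rule max.boundedI)
  show "(SUP u\<in>{u \<in> Y. norm u = 1}. infdist u X) \<le> 2 * \<gamma>"
  proof (rule cSUP_least)
    obtain u where "u \<in> Y" "norm u = 1"
      using exists_unit_in_subspace[OF assms(2)] assms(3,4) by metis
    then show "{u \<in> Y. norm u = 1} \<noteq> {}"
      by blast
    show "infdist u X \<le> 2 * \<gamma>" if "u \<in> {u \<in> Y. norm u = 1}" for u
      using infdist_le_if_almost_orthogonal_normals_dim[OF assms(1,2) _ assms(5) _ _ assms(6,7)]
        that assms(3) by simp
  qed
  show "(SUP v\<in>{v \<in> X. norm v = 1}. infdist v Y) \<le> 2 * \<gamma>"
  proof (rule cSUP_least)
    obtain v where "v \<in> X" "norm v = 1"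
      using exists_unit_in_subspace[OF assms(1,4)] by metis
    then show "{v \<in> X. norm v = 1} \<noteq> {}"
      by blast
    show "infdist v Y \<le> 2 * \<gamma>" if "v \<in> {v \<in> X. norm v = 1}" for v
      using infdist_le_if_almost_orthogonal_normals[OF assms(2,5) _ _ assms(6)] that assms(6)
      by fastforce
  qed
qed

section \<open>Tangent cones\<close>

lemma Tan_direction_subseq:
  fixes A :: "'a::euclidean_space set"
  assumes "\<And>n. xs n \<in> A" "\<And>n. xs n \<noteq> x" "xs \<longlonglongrightarrow> x"
  obtains \<sigma> u where "strict_mono \<sigma>" "(\<lambda>n. sgn (xs (\<sigma> n) - x)) \<longlonglongrightarrow> u" "norm u = 1" "u \<in> Tan A x"
proof -
  have "sgn (xs n - x) \<in> sphere 0 1" for n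
    using assms(2) by (simp add: norm_sgn)
  then obtain \<sigma> u where \<sigma>: "u \<in> sphere 0 1" "strict_mono \<sigma>" "(\<lambda>n. sgn (xs (\<sigma> n) - x)) \<longlonglongrightarrow> u"
    using seq_compactE[OF compact_imp_seq_compact[OF compact_sphere], of "\<lambda>n. sgn (xs n - x)"]
    unfolding comp_def by blast
  have "u \<in> Tan A x"
    unfolding Tan_def
  proof (intro CollectI disjI2 exI[of _ "\<lambda>i. xs (\<sigma> i)"] exI[of _ "\<lambda>i. 1 / norm (xs (\<sigma> i) - x)"] conjI allI)
    show "xs (\<sigma> i) \<in> A" "xs (\<sigma> i) \<noteq> x" "0 < 1 / norm (xs (\<sigma> i) - x)" for i
      using assms by auto
    show "(\<lambda>i. xs (\<sigma> i)) \<longlonglongrightarrow> x"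
      using LIMSEQ_subseq_LIMSEQ[OF assms(3) \<sigma>(2)] by (simp add: comp_def)
    show "(\<lambda>i. (1 / norm (xs (\<sigma> i) - x)) *\<^sub>R (xs (\<sigma> i) - x)) \<longlonglongrightarrow> u"
      using \<sigma>(3) by (simp add: sgn_div_norm field_simps)
  qed
  with \<sigma> that show ?thesis by simp
qed

lemma Tan_subset_0_iff:
  fixes A :: "'a::euclidean_space set"
  shows "Tan A x \<subseteq> {0} \<longleftrightarrow> \<not> x islimpt A"
proof
  assume "Tan A x \<subseteq> {0}"
  show "\<not> x islimpt A"
  proof
    assume "x islimpt A"
    then obtain xs where "\<forall>n. xs n \<in> A - {x}" "xs \<longlonglongrightarrow> x"
      unfolding islimpt_sequential by blast
    then obtain u where "norm u = 1" "u \<in> Tan A x"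
      using Tan_direction_subseq[of xs A x] by (metis Diff_iff insertI1)
    with \<open>Tan A x \<subseteq> {0}\<close> show False by auto
  qed
next
  assume "\<not> x islimpt A"
  show "Tan A x \<subseteq> {0}"
  proof
    fix u assume "u \<in> Tan A x"
    show "u \<in> {0}"
    proof (rule ccontr)
      assume "u \<notin> {0}"
      with \<open>u \<in> Tan A x\<close> obtain xs where "\<forall>i. xs i \<in> A - {x}" "xs \<longlonglongrightarrow> x"
        unfolding Tan_def by auto
      with \<open>\<not> x islimpt A\<close> show False
        unfolding islimpt_sequential by blast
    qed
  qed
qed

lemma Tset_0_eq_isolated:
  fixes A :: "'a::euclidean_space set"
  shows "Tset A 0 = {x \<in> A. \<not> x islimpt A}"
  using Tan_subset_0_iff[of A] by (auto simp: Tset_def TanSpan_def)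

lemma dual_Tan_eventually_inner_le:
  fixes A :: "'a::euclidean_space set"
  assumes dual: "\<forall>u\<in>Tan A y. e \<bullet> u \<le> 0" and "\<eta> > 0"
  shows "eventually (\<lambda>c. c \<in> A \<longrightarrow> e \<bullet> (c - y) \<le> \<eta> * norm (c - y)) (nhds y)"
proof (rule ccontr)
  assume "\<not> ?thesis"
  then have "\<forall>n. \<exists>c. dist c y < 1 / Suc n \<and> c \<in> A \<and> \<eta> * norm (c - y) < e \<bullet> (c - y)"
    unfolding eventually_nhds_metric by (auto simp: not_le)
  then obtain cs where cs: "\<And>n. dist (cs n) y < 1 / Suc n" "\<And>n. cs n \<in> A"
      "\<And>n. \<eta> * norm (cs n - y) < e \<bullet> (cs n - y)"
    by metis
  have "cs n \<noteq> y" for n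
    using cs(3)[of n] by auto
  moreover have "cs \<longlonglongrightarrow> y"
    using cs(1) by (intro LIMSEQ_norm_0[THEN Lim_null[THEN iffD2]]) (simp add: dist_norm)
  ultimately obtain \<sigma> u where \<sigma>: "(\<lambda>n. sgn (cs (\<sigma> n) - y)) \<longlonglongrightarrow> u" "u \<in> Tan A y"
    using Tan_direction_subseq[of cs A y] cs(2) by metis
  have "\<eta> \<le> e \<bullet> sgn (cs (\<sigma> n) - y)" for n
  proof -
    have "0 < norm (cs (\<sigma> n) - y)"
      using \<open>cs (\<sigma> n) \<noteq> y\<close> by simp
    moreover have "e \<bullet> sgn (cs (\<sigma> n) - y) = e \<bullet> (cs (\<sigma> n) - y) / norm (cs (\<sigma> n) - y)"
      by (simp add: sgn_div_norm divide_inverse mult.commute)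
    ultimately show ?thesis
      using cs(3)[of "\<sigma> n"] by (simp add: pos_le_divide_eq)
  qed
  then have "\<eta> \<le> e \<bullet> u"
    by (intro tendsto_lowerbound[OF tendsto_inner[OF tendsto_const \<sigma>(1)]]) auto
  with dual \<sigma>(2) \<open>\<eta> > 0\<close> show False by force
qed

lemma dual_Tan_eventually_nearest_close:
  fixes A :: "'a::euclidean_space set"
  assumes e: "norm e = 1" and dual: "\<forall>u\<in>Tan A y. e \<bullet> u \<le> 0" and "\<eta> > 0"
  shows "eventually (\<lambda>s. \<forall>b\<in>A. dist (y + s *\<^sub>R e) b \<le> s \<longrightarrow> norm (b - y) \<le> \<eta> * s) (at_right 0)"
proof -
  obtain \<rho> where "\<rho> > 0" and cone: "\<And>c. dist c y < \<rho> \<Longrightarrow> c \<in> A \<Longrightarrow> e \<bullet> (c - y) \<le> \<eta> / 2 * norm (c - y)"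
    using dual_Tan_eventually_inner_le[OF dual, of "\<eta> / 2"] \<open>\<eta> > 0\<close>
    unfolding eventually_nhds_metric by auto
  have "eventually (\<lambda>s::real. 0 < s \<and> s < \<rho> / 2) (at_right 0)"
    unfolding eventually_at_right_field using \<open>\<rho> > 0\<close> by (intro exI[of _ "\<rho> / 2"]) auto
  then show ?thesis
  proof eventually_elim
    case (elim s)
    show ?case
    proof (intro ballI impI)
      fix b assume b: "b \<in> A" "dist (y + s *\<^sub>R e) b \<le> s"
      have "norm (b - y) \<le> norm (s *\<^sub>R e) + dist (y + s *\<^sub>R e) b"
        using norm_triangle_ineq4[of "s *\<^sub>R e" "y + s *\<^sub>R e - b"] by (simp add: dist_norm)
      then have "dist b y < \<rho>"
        using b(2) elim e by (simp add: dist_norm)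
      moreover have "b \<in> cball (y + s *\<^sub>R e) s"
        using b(2) by simp
      ultimately have "norm (b - y) \<le> 2 * s * (\<eta> / 2)"
        using \<open>\<eta> > 0\<close> by (intro norm_le_if_mem_tangent_cball[OF e _ cone[OF _ b(1)]]) simp_all
      then show "norm (b - y) \<le> \<eta> * s"
        by (simp add: mult.commute)
    qed
  qed
qed

lemma Tan_approx:
  fixes A :: "'a::euclidean_space set"
  assumes "u \<in> Tan A x" "u \<noteq> 0" "\<epsilon> > 0"
  obtains c l where "c \<in> A" "c \<noteq> x" "l > 0" "norm (u - l *\<^sub>R (c - x)) < \<epsilon>" "l * (norm (c - x))\<^sup>2 < \<epsilon>"
proof -
  obtain xs ls where xs: "\<And>i. xs i \<in> A" "\<And>i. xs i \<noteq> x" "xs \<longlonglongrightarrow> x" "\<And>i. ls i > 0"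
    and lim: "(\<lambda>i. ls i *\<^sub>R (xs i - x)) \<longlonglongrightarrow> u"
    using assms(1,2) unfolding Tan_def by blast
  have "(\<lambda>i. norm (ls i *\<^sub>R (xs i - x)) * norm (xs i - x)) \<longlonglongrightarrow> norm u * norm (x - x)"
    by (intro tendsto_intros lim xs(3))
  moreover have "norm (ls i *\<^sub>R (xs i - x)) * norm (xs i - x) = ls i * (norm (xs i - x))\<^sup>2" for i
    using xs(4)[of i] by (simp add: power2_eq_square)
  ultimately have "(\<lambda>i. ls i * (norm (xs i - x))\<^sup>2) \<longlonglongrightarrow> 0"
    by simp
  then have "eventually (\<lambda>i. ls i * (norm (xs i - x))\<^sup>2 < \<epsilon>) sequentially"
    using assms(3) by (rule order_tendstoD)
  moreover have "eventually (\<lambda>i. dist (ls i *\<^sub>R (xs i - x)) u < \<epsilon>) sequentially"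
    using lim assms(3) by (rule tendstoD)
  ultimately obtain i where "ls i * (norm (xs i - x))\<^sup>2 < \<epsilon>" "dist (ls i *\<^sub>R (xs i - x)) u < \<epsilon>"
    using eventually_happens'[OF sequentially_bot] eventually_conj by (metis (no_types, lifting))
  then show ?thesis
    using that[of "xs i" "ls i"] xs by (simp add: dist_norm norm_minus_commute)
qed

section \<open>Sets of reach at least r\<close>

locale reach_ge =
  fixes A :: "'a::euclidean_space set" and r :: real
  assumes closed: "closed A" and nonempty: "A \<noteq> {}" and r_pos: "0 < r"
    and nearest_unique: "\<And>y a b. infdist y A < r \<Longrightarrow> a \<in> A \<Longrightarrow> b \<in> A \<Longrightarrow>
      dist y a = infdist y A \<Longrightarrow> dist y b = infdist y A \<Longrightarrow> a = b"

lemma positive_reach_imp_closed: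
  fixes A :: "'a::euclidean_space set"
  assumes "positive_reach A"
  shows "closed A"
  unfolding closure_subset_eq[symmetric]
proof
  obtain r where "r > 0" and nearest: "\<And>y. (\<exists>a\<in>A. dist y a < r) \<Longrightarrow>
      \<exists>!a. a \<in> A \<and> (\<forall>b\<in>A. dist y a \<le> dist y b)"
    using assms unfolding positive_reach_def by blast
  fix x assume x: "x \<in> closure A"
  have approx: "\<exists>a\<in>A. dist x a < \<epsilon>" if "\<epsilon> > 0" for \<epsilon>
    using x that unfolding closure_approachable by (simp add: dist_commute)
  then obtain a0 where a0: "a0 \<in> A" "\<forall>b\<in>A. dist x a0 \<le> dist x b"
    using ex1_implies_ex[OF nearest] \<open>r > 0\<close> by blast
  have "\<not> 0 < dist x a0"
  proof
    assume "0 < dist x a0"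
    then obtain b where "b \<in> A" "dist x b < dist x a0"
      using approx by blast
    with a0(2) show False
      by fastforce
  qed
  with a0 show "x \<in> A"
    by simp
qed

lemma positive_reach_imp_reach_ge:
  fixes A :: "'a::euclidean_space set"
  assumes "positive_reach A" "A \<noteq> {}"
  obtains r where "reach_ge A r"
proof -
  obtain r where "r > 0" and nearest: "\<And>y. (\<exists>a\<in>A. dist y a < r) \<Longrightarrow>
      \<exists>!a. a \<in> A \<and> (\<forall>b\<in>A. dist y a \<le> dist y b)"
    using assms(1) unfolding positive_reach_def by blast
  have "reach_ge A r"
  proof
    fix y a b assume h: "infdist y A < r" "a \<in> A" "b \<in> A"
      "dist y a = infdist y A" "dist y b = infdist y A"
    have "\<exists>a\<in>A. dist y a < r"
      using h(1,2,4) by (intro bexI[of _ a]) auto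
    then have "\<exists>!a. a \<in> A \<and> (\<forall>c\<in>A. dist y a \<le> dist y c)"
      by (rule nearest)
    moreover have "\<forall>c\<in>A. dist y a \<le> dist y c" "\<forall>c\<in>A. dist y b \<le> dist y c"
      using h(4,5) infdist_le by metis+
    ultimately show "a = b"
      using h(2,3) by blast
  qed (use assms positive_reach_imp_closed \<open>r > 0\<close> in auto)
  then show ?thesis
    using that by blast
qed

context reach_ge
begin

lemma nearest_point_exists:
  obtains p where "p \<in> A" "dist y p = infdist y A"
  using infdist_attains_inf[OF closed nonempty] by metis

lemma nearest_point_strict:
  assumes "infdist q A < r" "p \<in> A" "dist q p = infdist q A" "\<eta> > 0"
  obtains m where "infdist q A < m" "\<And>z. z \<in> A \<Longrightarrow> \<eta> \<le> dist z p \<Longrightarrow> m \<le> dist q z"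
proof -
  define d where "d = infdist q A"
  define K where "K = (cball q (d + 1) \<inter> A) - ball p \<eta>"
  obtain m where m: "d < m" "\<And>z. z \<in> K \<Longrightarrow> m \<le> dist q z"
  proof (cases "K = {}")
    case True
    then show ?thesis
      using that[of "d + 1"] by simp
  next
    case False
    have "compact K"
      unfolding K_def by (intro compact_diff compact_Int_closed compact_cball closed open_ball)
    moreover have "continuous_on K (dist q)"
      by (intro continuous_intros)
    ultimately obtain z0 where z0: "z0 \<in> K" "\<And>z. z \<in> K \<Longrightarrow> dist q z0 \<le> dist q z"
      using continuous_attains_inf[OF _ False] by blast
    have "z0 \<in> A" "z0 \<noteq> p"
      using z0(1) assms(4) unfolding K_def by auto
    then have "dist q z0 \<noteq> d"
      using nearest_unique[OF assms(1) _ assms(2) _ assms(3)] unfolding d_def by auto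
    moreover have "d \<le> dist q z0"
      unfolding d_def using infdist_le[OF \<open>z0 \<in> A\<close>] .
    ultimately show ?thesis
      using that[of "dist q z0"] z0(2) by simp
  qed
  show ?thesis
  proof (rule that[of "min m (d + 1)"])
    show "infdist q A < min m (d + 1)"
      using m(1) unfolding d_def by simp
    show "min m (d + 1) \<le> dist q z" if "z \<in> A" "\<eta> \<le> dist z p" for z
      using that m(2)[of z] unfolding K_def by (force simp: dist_commute)
  qed
qed

lemma nearest_point_continuous:
  assumes "infdist q A < r" "p \<in> A" "dist q p = infdist q A" "\<eta> > 0"
  shows "eventually (\<lambda>y. \<forall>p'\<in>A. dist y p' = infdist y A \<longrightarrow> dist p' p < \<eta>) (nhds q)"
proof -
  obtain m where m: "infdist q A < m" "\<And>z. z \<in> A \<Longrightarrow> \<eta> \<le> dist z p \<Longrightarrow> m \<le> dist q z"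
    using nearest_point_strict[OF assms] by blast
  have "eventually (\<lambda>y. dist y q < (m - infdist q A) / 2) (nhds q)"
    using m(1) unfolding eventually_nhds_metric by (intro exI[of _ "(m - infdist q A) / 2"]) auto
  then show ?thesis
  proof eventually_elim
    case (elim y)
    show ?case
    proof (intro ballI impI)
      fix p' assume p': "p' \<in> A" "dist y p' = infdist y A"
      have "dist q p' \<le> dist y q + infdist y A"
        using dist_triangle[of q p' y] p'(2) by (simp add: dist_commute)
      moreover have "infdist y A \<le> infdist q A + dist y q"
        by (rule infdist_triangle)
      ultimately have "dist q p' < m"
        using elim by argo
      then show "dist p' p < \<eta>"
        using m(2)[OF p'(1)] by fastforce
    qed
  qed
qed

lemma infdist_increases_along:
  assumes "infdist q A < r" "p \<in> A" "dist q p = infdist q A" "0 < g \<bullet> (q - p)"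
  shows "eventually (\<lambda>\<epsilon>. infdist q A < infdist (q + \<epsilon> *\<^sub>R g) A) (at_right 0)"
proof -
  define \<eta> where "\<eta> = g \<bullet> (q - p) / (norm g + 1)"
  have "norm g + 1 \<noteq> 0"
    using norm_ge_zero[of g] by linarith
  have "\<eta> > 0"
    unfolding \<eta>_def using assms(4) by (simp add: add_nonneg_pos)
  have "((\<lambda>\<epsilon>. q + \<epsilon> *\<^sub>R g) \<longlongrightarrow> q) (at_right 0)"
    by (intro tendsto_eq_intros) auto
  then have "eventually (\<lambda>\<epsilon>. \<forall>p'\<in>A. dist (q + \<epsilon> *\<^sub>R g) p' = infdist (q + \<epsilon> *\<^sub>R g) A \<longrightarrow> dist p' p < \<eta>)
      (at_right 0)"
    using nearest_point_continuous[OF assms(1-3) \<open>\<eta> > 0\<close>] by (rule filterlim_iff[THEN iffD1, rule_format])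
  moreover have "eventually (\<lambda>\<epsilon>::real. 0 < \<epsilon>) (at_right 0)"
    by (simp add: eventually_at_right_less)
  ultimately show ?thesis
  proof eventually_elim
    case (elim \<epsilon>)
    obtain p' where p': "p' \<in> A" "dist (q + \<epsilon> *\<^sub>R g) p' = infdist (q + \<epsilon> *\<^sub>R g) A"
      using nearest_point_exists by metis
    have "\<bar>g \<bullet> (p - p')\<bar> \<le> norm g * norm (p - p')"
      by (rule Cauchy_Schwarz_ineq2)
    also have "\<dots> \<le> norm g * \<eta>"
      using elim(1) p' by (intro mult_left_mono) (auto simp: dist_norm norm_minus_commute)
    also have "\<dots> < (norm g + 1) * \<eta>"
      using \<open>\<eta> > 0\<close> by (simp add: distrib_right)
    also have "\<dots> = g \<bullet> (q - p)"
      using \<open>norm g + 1 \<noteq> 0\<close> unfolding \<eta>_def by simp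
    finally have "0 < g \<bullet> (q - p')"
      by (simp add: inner_diff_right)
    with elim(2) have "dist q p' < dist (q + \<epsilon> *\<^sub>R g) p'"
      by (rule dist_lt_dist_add_scaleR)
    then show ?case
      using infdist_le[OF p'(1), of q] p'(2) by linarith
  qed
qed

lemma farthest_point_in_cball:
  assumes q: "q \<in> cball z \<tau>" and q_max: "\<And>y. y \<in> cball z \<tau> \<Longrightarrow> infdist y A \<le> infdist q A"
    and "0 < \<tau>" "infdist q A < r" "p \<in> A" "dist q p = infdist q A" "q \<noteq> p"
  shows "q = z + \<tau> *\<^sub>R sgn (q - p)"
proof (rule ccontr)
  \<comment> \<open>otherwise moving q towards z + \<tau> n stays in the ball and increases the distance to A\<close>
  define n where "n = sgn (q - p)"
  define g where "g = z + \<tau> *\<^sub>R n - q"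
  assume "q \<noteq> z + \<tau> *\<^sub>R sgn (q - p)"
  then have "0 < g \<bullet> n"
    using inner_lt_boundary_point_cball[of n \<tau> q z] q assms(3,7)
    unfolding g_def n_def by (simp add: inner_diff_left norm_sgn)
  moreover have "g \<bullet> n = g \<bullet> (q - p) / norm (q - p)"
    unfolding n_def by (simp add: sgn_div_norm divide_inverse mult.commute)
  ultimately have "0 < g \<bullet> (q - p)"
    by (simp add: zero_less_divide_iff)
  then have "eventually (\<lambda>\<epsilon>. infdist q A < infdist (q + \<epsilon> *\<^sub>R g) A) (at_right 0)"
    by (rule infdist_increases_along[OF assms(4-6)])
  moreover have "eventually (\<lambda>\<epsilon>::real. 0 < \<epsilon> \<and> \<epsilon> < 1) (at_right 0)"
    unfolding eventually_at_right_field by (intro exI[of _ 1]) auto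
  ultimately obtain \<epsilon> where \<epsilon>: "0 < \<epsilon>" "\<epsilon> < 1" "infdist q A < infdist (q + \<epsilon> *\<^sub>R g) A"
    using eventually_happens'[OF trivial_limit_at_right_real] eventually_conj by (metis (no_types, lifting))
  have "z + \<tau> *\<^sub>R n \<in> cball z \<tau>"
    using assms(3,7) unfolding n_def by (simp add: dist_norm norm_sgn)
  then have "(1 - \<epsilon>) *\<^sub>R q + \<epsilon> *\<^sub>R (z + \<tau> *\<^sub>R n) \<in> cball z \<tau>"
    using q \<epsilon>(1,2) by (intro convexD[OF convex_cball]) auto
  moreover have "(1 - \<epsilon>) *\<^sub>R q + \<epsilon> *\<^sub>R (z + \<tau> *\<^sub>R n) = q + \<epsilon> *\<^sub>R g"
    unfolding g_def by (simp add: algebra_simps)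
  ultimately show False
    using q_max \<epsilon>(3) by fastforce
qed

lemma normal_segment_unique:
  assumes "b \<in> A" "p \<in> A" "norm w = 1" "norm n = 1" "0 < s" "s < r"
    and "infdist (b + s *\<^sub>R w) A = s" "b + s *\<^sub>R w = p + s *\<^sub>R n"
  shows "p = b" "n = w"
proof -
  have "dist (b + s *\<^sub>R w) b = s"
    using assms(3,5) by (simp add: dist_norm)
  moreover have "dist (b + s *\<^sub>R w) p = s"
    unfolding assms(8) using assms(4,5) by (simp add: dist_norm)
  ultimately show "p = b"
    using nearest_unique[of "b + s *\<^sub>R w" p b] assms(1,2,6,7) by argo
  with assms(5,8) show "n = w"
    by simp
qed

lemma normal_segment_extend_step:
  assumes b: "b \<in> A" and w: "norm w = 1" and s: "0 < s" "infdist (b + s *\<^sub>R w) A = s"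
    and \<tau>: "0 < \<tau>" "\<tau> \<le> s" "s + \<tau> < r"
  shows "infdist (b + (s + \<tau>) *\<^sub>R w) A = s + \<tau>"
proof -
  define z where "z = b + s *\<^sub>R w"
  have "cball z \<tau> \<noteq> {}"
    using \<tau>(1) by simp
  then obtain q where q: "q \<in> cball z \<tau>" and q_max: "\<And>y. y \<in> cball z \<tau> \<Longrightarrow> infdist y A \<le> infdist q A"
    using continuous_attains_sup[OF compact_cball _ continuous_on_infdist[OF continuous_on_id]] by blast
  define d where "d = infdist q A"
  have "s \<le> d"
    using q_max[of z] \<tau>(1) s(2) unfolding d_def z_def by simp
  have "d \<le> s + \<tau>"
    using infdist_triangle[of q A z] q s(2) unfolding d_def z_def by (simp add: dist_commute)
  obtain p where p: "p \<in> A" "dist q p = d"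
    using nearest_point_exists unfolding d_def by metis
  have "0 < d"
    using \<open>s \<le> d\<close> s(1) by simp
  then have "q \<noteq> p"
    using p(2) by auto
  define n where "n = sgn (q - p)"
  have n: "norm n = 1" "q - p = d *\<^sub>R n"
    unfolding n_def using \<open>q \<noteq> p\<close> \<open>0 < d\<close> p(2) by (simp_all add: norm_sgn sgn_div_norm dist_norm)
  \<comment> \<open>the farthest point q from A in the ball continues the segment from its nearest point p through z\<close>
  have "q = z + \<tau> *\<^sub>R n"
    using farthest_point_in_cball[OF q q_max \<tau>(1) _ p(1) _ \<open>q \<noteq> p\<close>] p(2) \<open>d \<le> s + \<tau>\<close> \<tau>(3)
    unfolding n_def d_def by simp
  then have "z = p + (d - \<tau>) *\<^sub>R n"
    using n(2) by (simp add: algebra_simps)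
  then have "s \<le> d - \<tau>"
    using infdist_le[OF p(1), of z] s(2) n(1) \<open>s \<le> d\<close> \<tau>(2) unfolding z_def by (simp add: dist_norm)
  then have "d - \<tau> = s"
    using \<open>d \<le> s + \<tau>\<close> by linarith
  then have "p = b" "n = w"
    using normal_segment_unique[OF b p(1) w n(1) s(1) _ s(2)] \<open>z = p + (d - \<tau>) *\<^sub>R n\<close> \<tau>(1,3)
    unfolding z_def by simp_all
  with \<open>q = z + \<tau> *\<^sub>R n\<close> \<open>d - \<tau> = s\<close> show ?thesis
    unfolding z_def d_def by (simp add: algebra_simps)
qed

lemma normal_segment_extend:
  assumes b: "b \<in> A" and w: "norm w = 1" and s: "0 < s" "infdist (b + s *\<^sub>R w) A = s"
    and t: "0 \<le> t" "t < r"
  shows "infdist (b + t *\<^sub>R w) A = t"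
proof -
  \<comment> \<open>each step adds at most half the current length, so the lengths grow geometrically\<close>
  have grow: "infdist (b + min (s * (3/2)^k) t *\<^sub>R w) A = min (s * (3/2)^k) t" for k
  proof (induction k)
    case 0
    show ?case
      using infdist_shorter_segment[OF b w s(2) t(1)] s(2) by (cases "t \<le> s") auto
  next
    case (Suc k)
    define s' where "s' = s * (3/2)^k"
    have "0 < s'"
      unfolding s'_def using s(1) by simp
    show ?case
    proof (cases "t \<le> s'")
      case True
      then have "min (s * (3/2)^Suc k) t = t" "min (s * (3/2)^k) t = t"
        using \<open>0 < s'\<close> unfolding s'_def by auto
      then show ?thesis
        using Suc.IH by simp
    next
      case False
      define \<tau> where "\<tau> = min (s' / 2) (t - s')"
      have "infdist (b + s' *\<^sub>R w) A = s'"
        using Suc.IH False unfolding s'_def by simp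
      moreover have "0 < \<tau>" "\<tau> \<le> s'" "s' + \<tau> < r"
        unfolding \<tau>_def using False \<open>0 < s'\<close> t by auto
      ultimately have "infdist (b + (s' + \<tau>) *\<^sub>R w) A = s' + \<tau>"
        using normal_segment_extend_step[OF b w \<open>0 < s'\<close>] by blast
      moreover have "s' + \<tau> = min (s * (3/2)^Suc k) t"
        unfolding \<tau>_def s'_def using False by (auto simp: min_def s'_def)
      ultimately show ?thesis
        by simp
    qed
  qed
  obtain k where "t / s < (3/2::real)^k"
    using real_arch_pow[of "3/2" "t / s"] by auto
  then have "t < s * (3/2)^k"
    using s(1) by (simp add: field_simps)
  then show ?thesis
    using grow[of k] by simp
qed

lemma dual_Tan_nearest_point_close:
  assumes y: "y \<in> A" and e: "norm e = 1" and dual: "\<forall>u\<in>Tan A y. e \<bullet> u \<le> 0" and "\<eta> > 0"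
  obtains s b where "0 < s" "s \<le> 1" "b \<in> A" "dist (y + s *\<^sub>R e) b = infdist (y + s *\<^sub>R e) A"
    "norm (b - y) \<le> \<eta> * s"
proof -
  have "eventually (\<lambda>s. \<forall>b\<in>A. dist (y + s *\<^sub>R e) b \<le> s \<longrightarrow> norm (b - y) \<le> \<eta> * s) (at_right 0)"
    by (rule dual_Tan_eventually_nearest_close[OF e dual \<open>\<eta> > 0\<close>])
  moreover have "eventually (\<lambda>s::real. 0 < s \<and> s \<le> 1) (at_right 0)"
    unfolding eventually_at_right_field by (intro exI[of _ 1]) auto
  ultimately have "eventually (\<lambda>s. 0 < s \<and> s \<le> 1 \<and>
      (\<forall>b\<in>A. dist (y + s *\<^sub>R e) b \<le> s \<longrightarrow> norm (b - y) \<le> \<eta> * s)) (at_right 0)"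
    by eventually_elim blast
  then obtain s where s: "0 < s" "s \<le> 1"
    and near: "\<And>b. b \<in> A \<Longrightarrow> dist (y + s *\<^sub>R e) b \<le> s \<Longrightarrow> norm (b - y) \<le> \<eta> * s"
    using eventually_happens'[OF trivial_limit_at_right_real] by blast
  obtain b where b: "b \<in> A" "dist (y + s *\<^sub>R e) b = infdist (y + s *\<^sub>R e) A"
    using nearest_point_exists by metis
  moreover have "dist (y + s *\<^sub>R e) b \<le> s"
    using b(2) infdist_le[OF y, of "y + s *\<^sub>R e"] e s(1) by (simp add: dist_norm)
  ultimately show ?thesis
    using that s near by blast
qed

(* The witnesses are the nearest point b to y + s e for a small s > 0 and the unit vector n from b
   towards y + s e. *)
lemma dual_Tan_approx_normal_segment:
  assumes y: "y \<in> A" and e: "norm e = 1" and dual: "\<forall>u\<in>Tan A y. e \<bullet> u \<le> 0" and "\<eta> > 0"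
  obtains b n s where "b \<in> A" "norm n = 1" "norm (b - y) \<le> \<eta>" "norm (n - e) \<le> \<eta>"
    "0 < s" "infdist (b + s *\<^sub>R n) A = s"
proof -
  define \<eta>' where "\<eta>' = min (1/2) (\<eta>/2)"
  have \<eta>': "0 < \<eta>'" "\<eta>' \<le> 1/2" "2 * \<eta>' \<le> \<eta>"
    unfolding \<eta>'_def using \<open>\<eta> > 0\<close> by auto
  obtain s b where s: "0 < s" "s \<le> 1" and b: "b \<in> A" "dist (y + s *\<^sub>R e) b = infdist (y + s *\<^sub>R e) A"
    and close: "norm (b - y) \<le> \<eta>' * s"
    using dual_Tan_nearest_point_close[OF y e dual \<eta>'(1)] by metis
  define w where "w = y + s *\<^sub>R e - b"
  have "norm (w - s *\<^sub>R e) = norm (b - y)"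
    unfolding w_def by (simp add: norm_minus_commute)
  moreover have "\<eta>' * s \<le> s / 2"
    using s(1) \<eta>'(2) by (simp add: mult_right_mono)
  moreover have "norm (s *\<^sub>R e) - norm w \<le> norm (w - s *\<^sub>R e)"
    using norm_triangle_ineq2[of "s *\<^sub>R e" w] by (simp add: norm_minus_commute)
  moreover have "norm (s *\<^sub>R e) = s"
    using e s(1) by simp
  ultimately have "s / 2 \<le> norm w"
    using close by linarith
  show ?thesis
  proof (rule that[of b "sgn w" "norm w"])
    show "norm (b - y) \<le> \<eta>"
      using close mult_right_le_one_le[of \<eta>' s] s \<eta>' by linarith
    show "norm (sgn w) = 1" "0 < norm w"
      using \<open>s / 2 \<le> norm w\<close> s(1) by (auto simp: norm_sgn)
    have "norm (sgn w - e) \<le> 2 * norm (b - y) / s"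
      using norm_sgn_diff_le[OF e s(1), of w] \<open>norm (w - s *\<^sub>R e) = norm (b - y)\<close> by simp
    also have "\<dots> \<le> 2 * \<eta>'"
      using close s(1) by (simp add: field_simps)
    finally show "norm (sgn w - e) \<le> \<eta>"
      using \<eta>'(3) by linarith
    have "w \<noteq> 0"
      using \<open>s / 2 \<le> norm w\<close> s(1) by auto
    then have "b + norm w *\<^sub>R sgn w = y + s *\<^sub>R e"
      unfolding w_def by (simp add: sgn_div_norm)
    then show "infdist (b + norm w *\<^sub>R sgn w) A = norm w"
      using b(2) unfolding w_def by (simp add: dist_norm norm_minus_commute)
  qed (rule b(1))
qed

lemma dual_Tan_normal_segment:
  assumes y: "y \<in> A" and e: "norm e = 1" and dual: "\<forall>u\<in>Tan A y. e \<bullet> u \<le> 0"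
    and t: "0 \<le> t" "t < r"
  shows "infdist (y + t *\<^sub>R e) A = t"
proof (rule antisym)
  show "infdist (y + t *\<^sub>R e) A \<le> t"
    using infdist_le[OF y, of "y + t *\<^sub>R e"] e t(1) by (simp add: dist_norm)
  show "t \<le> infdist (y + t *\<^sub>R e) A"
  proof (rule field_le_epsilon)
    fix \<epsilon> :: real assume "0 < \<epsilon>"
    define \<delta> where "\<delta> = \<epsilon> / (1 + t)"
    have "0 < \<delta>"
      unfolding \<delta>_def using \<open>0 < \<epsilon>\<close> t(1) by simp
    then obtain b n s where bn: "b \<in> A" "norm n = 1" "norm (b - y) \<le> \<delta>"
      "norm (n - e) \<le> \<delta>" "0 < s" "infdist (b + s *\<^sub>R n) A = s"
      using dual_Tan_approx_normal_segment[OF y e dual] by metis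
    have "t = infdist (b + t *\<^sub>R n) A"
      using normal_segment_extend[OF bn(1,2,5,6) t] ..
    also have "\<dots> \<le> infdist (y + t *\<^sub>R e) A + dist (b + t *\<^sub>R n) (y + t *\<^sub>R e)"
      by (rule infdist_triangle)
    also have "dist (b + t *\<^sub>R n) (y + t *\<^sub>R e) = norm ((b - y) + t *\<^sub>R (n - e))"
      by (simp add: dist_norm algebra_simps)
    also have "\<dots> \<le> norm (b - y) + t * norm (n - e)"
      using norm_triangle_ineq[of "b - y" "t *\<^sub>R (n - e)"] t(1) by simp
    also have "\<dots> \<le> (1 + t) * \<delta>"
      using bn(3) mult_left_mono[OF bn(4) t(1)] by (simp add: distrib_right)
    also have "\<dots> = \<epsilon>"
      unfolding \<delta>_def using t(1) by simp
    finally show "t \<le> infdist (y + t *\<^sub>R e) A + \<epsilon>"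
      by simp
  qed
qed

lemma dual_Tan_inner_le:
  assumes "y \<in> A" "norm e = 1" "\<forall>u\<in>Tan A y. e \<bullet> u \<le> 0" "c \<in> A"
  shows "e \<bullet> (c - y) \<le> (norm (c - y))\<^sup>2 / r"
proof -
  have "infdist (y + (r / 2) *\<^sub>R e) A = r / 2"
    using dual_Tan_normal_segment[OF assms(1-3)] r_pos by simp
  from inner_le_if_infdist_eq[OF this assms(2,4)] show ?thesis
    using r_pos by (simp add: field_simps)
qed

lemma orthogonal_Tan_abs_inner_le:
  assumes "y \<in> A" "norm e = 1" "\<forall>l\<in>Tan A y. e \<bullet> l = 0" "c \<in> A"
  shows "\<bar>e \<bullet> (c - y)\<bar> \<le> (norm (c - y))\<^sup>2 / r"
  using dual_Tan_inner_le[OF assms(1,2) _ assms(4)] dual_Tan_inner_le[OF assms(1) _ _ assms(4), of "- e"]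
    assms(2,3)
  by (simp add: abs_le_iff)

lemma eventually_abs_inner_Tan_normal_le:
  assumes u: "u \<in> Tan A x" and "\<theta> > 0"
  shows "eventually (\<lambda>y. y \<in> A \<longrightarrow>
      (\<forall>e. norm e = 1 \<longrightarrow> (\<forall>l\<in>Tan A y. e \<bullet> l = 0) \<longrightarrow> \<bar>u \<bullet> e\<bar> \<le> \<theta>)) (nhds x)"
proof (cases "u = 0")
  case True
  with \<open>\<theta> > 0\<close> show ?thesis
    by simp
next
  case False
  have "0 < min (\<theta> / 3) (\<theta> * r / 12)"
    using \<open>\<theta> > 0\<close> r_pos by simp
  then obtain c l where c: "c \<in> A" "c \<noteq> x" and "l > 0"
    and approx: "norm (u - l *\<^sub>R (c - x)) < \<theta> / 3" and sq: "l * (norm (c - x))\<^sup>2 < \<theta> * r / 12"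
    using Tan_approx[OF u False] by (metis min_less_iff_conj)
  \<comment> \<open>u is close to l (c - x), and a unit normal e at y satisfies |e \<bullet> (c - y)| \<le> |c - y|^2 / r\<close>
  define \<delta> where "\<delta> = min (norm (c - x)) (\<theta> / (3 * l))"
  have "\<delta> > 0"
    unfolding \<delta>_def using c(2) \<open>l > 0\<close> \<open>\<theta> > 0\<close> by simp
  show ?thesis
    unfolding eventually_nhds_metric
  proof (intro exI conjI allI impI)
    fix y e assume y: "dist y x < \<delta>" "y \<in> A" and e: "norm e = 1" and orth: "\<forall>l\<in>Tan A y. e \<bullet> l = 0"
    have "norm (c - y) \<le> 2 * norm (c - x)"
      using norm_triangle_ineq4[of "c - x" "y - x"] y(1) unfolding \<delta>_def by (simp add: dist_norm)
    then have "(norm (c - y))\<^sup>2 \<le> 4 * (norm (c - x))\<^sup>2"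
      using power_mono[of "norm (c - y)" "2 * norm (c - x)" 2] by (simp add: power_mult_distrib)
    then have "(norm (c - y))\<^sup>2 / r \<le> 4 * (norm (c - x))\<^sup>2 / r"
      using r_pos by (intro divide_right_mono) auto
    then have normal: "\<bar>(c - y) \<bullet> e\<bar> \<le> 4 * (norm (c - x))\<^sup>2 / r"
      using orthogonal_Tan_abs_inner_le[OF y(2) e orth c(1)] by (simp add: inner_commute)
    have "u \<bullet> e = (u - l *\<^sub>R (c - x)) \<bullet> e + l * ((c - y) \<bullet> e) + l * ((y - x) \<bullet> e)"
      by (simp add: inner_diff_left algebra_simps)
    then have "\<bar>u \<bullet> e\<bar> \<le> \<bar>(u - l *\<^sub>R (c - x)) \<bullet> e\<bar> + \<bar>l * ((c - y) \<bullet> e)\<bar> + \<bar>l * ((y - x) \<bullet> e)\<bar>"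
      by (metis abs_triangle_ineq add_right_mono order.trans)
    also have "\<dots> = \<bar>(u - l *\<^sub>R (c - x)) \<bullet> e\<bar> + l * \<bar>(c - y) \<bullet> e\<bar> + l * \<bar>(y - x) \<bullet> e\<bar>"
      using \<open>l > 0\<close> by (simp add: abs_mult)
    also have "\<dots> \<le> norm (u - l *\<^sub>R (c - x)) + l * (4 * (norm (c - x))\<^sup>2 / r) + l * norm (y - x)"
    proof (intro add_mono mult_left_mono)
      show "\<bar>(u - l *\<^sub>R (c - x)) \<bullet> e\<bar> \<le> norm (u - l *\<^sub>R (c - x))" "\<bar>(y - x) \<bullet> e\<bar> \<le> norm (y - x)"
        using Cauchy_Schwarz_ineq2[of "u - l *\<^sub>R (c - x)" e] Cauchy_Schwarz_ineq2[of "y - x" e] e by simp_all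
    qed (use normal \<open>l > 0\<close> in simp_all)
    also have "\<dots> < \<theta> / 3 + \<theta> / 3 + \<theta> / 3"
      using approx sq r_pos y(1) \<open>l > 0\<close> unfolding \<delta>_def
      by (intro add_strict_mono) (simp_all add: dist_norm field_simps)
    finally show "\<bar>u \<bullet> e\<bar> \<le> \<theta>"
      by simp
  qed (rule \<open>\<delta> > 0\<close>)
qed

lemma eventually_almost_orthogonal_normals:
  assumes "\<theta> > 0"
  shows "eventually (\<lambda>y. y \<in> A \<longrightarrow> almost_orthogonal_normals \<theta> (TanSpan A y) (TanSpan A x)) (nhds x)"
proof -
  obtain B where B: "B \<subseteq> Tan A x" "independent B" "Tan A x \<subseteq> span B"
    using basis_exists by metis
  have "finite B"
    using B(2) by (rule finiteI_independent)
  have "span B = TanSpan A x"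
    unfolding TanSpan_def using B(1,3) by (metis span_mono span_span subset_antisym)
  obtain C where C: "C > 0" "\<And>e z. z \<in> span B \<Longrightarrow> \<bar>z \<bullet> e\<bar> \<le> C * norm z * (\<Sum>u\<in>B. \<bar>u \<bullet> e\<bar>)"
    using span_inner_le_sum[OF \<open>finite B\<close>] by metis
  define \<theta>' where "\<theta>' = \<theta> / C / (real (card B) + 1)"
  have "\<theta>' > 0"
    unfolding \<theta>'_def using assms C(1) by simp
  have "C * (real (card B) * \<theta>') \<le> C * ((real (card B) + 1) * \<theta>')"
    using C(1) \<open>\<theta>' > 0\<close> by simp
  also have "\<dots> = \<theta>"
    unfolding \<theta>'_def using C(1) by (simp add: add_pos_nonneg)
  finally have "C * (real (card B) * \<theta>') \<le> \<theta>" .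
  have "eventually (\<lambda>y. \<forall>u\<in>B. y \<in> A \<longrightarrow>
      (\<forall>e. norm e = 1 \<longrightarrow> (\<forall>l\<in>Tan A y. e \<bullet> l = 0) \<longrightarrow> \<bar>u \<bullet> e\<bar> \<le> \<theta>')) (nhds x)"
    using eventually_abs_inner_Tan_normal_le[OF _ \<open>\<theta>' > 0\<close>] B(1) \<open>finite B\<close>
    by (intro eventually_ball_finite) auto
  then show ?thesis
  proof eventually_elim
    case (elim y)
    show ?case
      unfolding almost_orthogonal_normals_def
    proof (intro impI allI ballI)
      fix e z assume "y \<in> A" "norm e = 1" "\<forall>l\<in>TanSpan A y. e \<bullet> l = 0" "z \<in> TanSpan A x"
      then have "\<forall>u\<in>B. \<bar>u \<bullet> e\<bar> \<le> \<theta>'"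
        using elim span_base unfolding TanSpan_def by blast
      then have "(\<Sum>u\<in>B. \<bar>u \<bullet> e\<bar>) \<le> real (card B) * \<theta>'"
        using sum_mono[of B "\<lambda>u. \<bar>u \<bullet> e\<bar>" "\<lambda>_. \<theta>'"] by simp
      then have "C * norm z * (\<Sum>u\<in>B. \<bar>u \<bullet> e\<bar>) \<le> C * norm z * (real (card B) * \<theta>')"
        using C(1) by (intro mult_left_mono) auto
      also have "\<dots> = (C * (real (card B) * \<theta>')) * norm z"
        by (simp add: algebra_simps)
      also have "\<dots> \<le> \<theta> * norm z"
        using \<open>C * (real (card B) * \<theta>') \<le> \<theta>\<close> by (rule mult_right_mono) simp
      finally show "\<bar>z \<bullet> e\<bar> \<le> \<theta> * norm z"
        using C(2)[of z e] \<open>z \<in> TanSpan A x\<close> \<open>span B = TanSpan A x\<close> by simp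
    qed
  qed
qed

lemma eventually_dim_TanSpan_ge:
  "eventually (\<lambda>y. y \<in> A \<longrightarrow> dim (TanSpan A x) \<le> dim (TanSpan A y)) (nhds x)"
proof -
  have "eventually (\<lambda>y. y \<in> A \<longrightarrow> almost_orthogonal_normals (1/2) (TanSpan A y) (TanSpan A x)) (nhds x)"
    by (rule eventually_almost_orthogonal_normals) simp
  then show ?thesis
  proof eventually_elim
    case (elim y)
    show ?case
      using elim dim_le_if_almost_orthogonal_normals[of "TanSpan A x" "1/2" "TanSpan A y"]
      by (simp add: TanSpan_def)
  qed
qed

lemma Tset_disjoint_closure_lower: "Tset A k \<inter> closure (\<Union>i<k. Tset A i) = {}"
proof -
  have "x \<notin> closure (\<Union>i<k. Tset A i)" if "x \<in> Tset A k" for x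
  proof -
    obtain S where "open S" "x \<in> S" and ge: "\<And>y. y \<in> S \<Longrightarrow> y \<in> A \<Longrightarrow> k \<le> dim (TanSpan A y)"
      using eventually_dim_TanSpan_ge[of x] \<open>x \<in> Tset A k\<close> unfolding eventually_nhds Tset_def by auto
    then have "S \<inter> (\<Union>i<k. Tset A i) = {}"
      unfolding Tset_def by fastforce
    with \<open>open S\<close> \<open>x \<in> S\<close> show ?thesis
      using open_Int_closure_eq_empty by blast
  qed
  then show ?thesis
    by blast
qed

lemma closed_Tset_1: "closed (Tset A 1)"
  unfolding closed_limpt
proof (intro allI impI)
  fix x assume x: "x islimpt Tset A 1"
  then have "x islimpt A"
    by (rule islimpt_subset) (auto simp: Tset_def)
  then have "x \<in> A"
    using closed closed_limpt by blast
  define j where "j = dim (TanSpan A x)"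
  then have "x \<in> Tset A j"
    using \<open>x \<in> A\<close> by (simp add: Tset_def)
  have "x \<notin> Tset A 0"
    using \<open>x islimpt A\<close> Tset_0_eq_isolated[of A] by blast
  then have "j \<noteq> 0"
    using \<open>x \<in> Tset A j\<close> by metis
  moreover have "\<not> 2 \<le> j"
  proof
    assume "2 \<le> j"
    then have "Tset A 1 \<subseteq> (\<Union>i<j. Tset A i)"
      by (intro UN_upper) simp
    with x have "x \<in> closure (\<Union>i<j. Tset A i)"
      unfolding closure_def using islimpt_subset by blast
    with \<open>x \<in> Tset A j\<close> show False
      using Tset_disjoint_closure_lower[of j] by blast
  qed
  ultimately have "j = 1"
    by linarith
  with \<open>x \<in> Tset A j\<close> show "x \<in> Tset A 1"
    by simp
qed

lemma psi_continuous_on_Tset: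
  assumes "x \<in> Tset A k" "1 \<le> k" "\<epsilon> > 0"
  shows "\<exists>\<delta>>0. \<forall>y\<in>Tset A k. dist y x < \<delta> \<longrightarrow> grass_dist (psi A y) (psi A x) < \<epsilon>"
proof -
  define \<gamma> where "\<gamma> = min (1/2) (\<epsilon>/4)"
  have \<gamma>: "0 < \<gamma>" "\<gamma> \<le> 1/2" "2 * \<gamma> < \<epsilon>"
    unfolding \<gamma>_def using assms(3) by auto
  obtain \<delta> where "\<delta> > 0" and near: "\<And>y. dist y x < \<delta> \<Longrightarrow> y \<in> A \<Longrightarrow>
      almost_orthogonal_normals \<gamma> (TanSpan A y) (TanSpan A x)"
    using eventually_almost_orthogonal_normals[OF \<gamma>(1), of x] unfolding eventually_nhds_metric by blast
  have "grass_dist (psi A y) (psi A x) < \<epsilon>" if y: "y \<in> Tset A k" "dist y x < \<delta>" for y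
  proof -
    have "y \<in> A" "dim (TanSpan A y) = dim (TanSpan A x)" "1 \<le> dim (TanSpan A x)"
      using y(1) assms(1,2) by (simp_all add: Tset_def)
    moreover have "subspace (TanSpan A x)" "subspace (TanSpan A y)"
      by (simp_all add: TanSpan_def)
    ultimately have "grass_dist (TanSpan A y) (TanSpan A x) \<le> 2 * \<gamma>"
      using near[OF y(2)] \<gamma>(1,2)
      by (intro grass_dist_le_if_almost_orthogonal_normals) simp_all
    with \<gamma>(3) show ?thesis
      by (simp add: psi_def)
  qed
  with \<open>\<delta> > 0\<close> show ?thesis
    by blast
qed

end

theorem lemma3p3:
  fixes A :: "'a::euclidean_space set" and k :: nat
  assumes "positive_reach A" and "1 \<le> k" and "k \<le> DIM('a)"
  shows "Tset A k \<inter> closure (\<Union>i<k. Tset A i) = {}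
    \<and> (\<forall>x\<in>Tset A k. \<forall>e>0. \<exists>\<delta>>0. \<forall>y\<in>Tset A k.
           dist y x < \<delta> \<longrightarrow> grass_dist (psi A y) (psi A x) < e)
    \<and> closed (Tset A 1)
    \<and> Tset A 0 = {x \<in> A. \<not> x islimpt A}"
proof (cases "A = {}")
  case True
  then show ?thesis
    by (simp add: Tset_def)
next
  case False
  then obtain r where "reach_ge A r"
    using positive_reach_imp_reach_ge[OF assms(1)] by blast
  then interpret reach_ge A r .
  show ?thesis
    using Tset_disjoint_closure_lower psi_continuous_on_Tset[OF _ assms(2)] closed_Tset_1 Tset_0_eq_isolated
    by blast
qed

end
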